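(* Two measure-and-prepare instruments $\mathcal{I}\in\mathrm{Ins}(\Omega,\mathcal{H},\mathcal{K})$ and $\mathcal{J}\in\mathrm{Ins}(\Lambda,\mathcal{H},\mathcal{V})$ are compatible if and only if their induced POVMs $\mathsf{A}^{\mathcal{I}}$ and $\mathsf{A}^{\mathcal{J}}$ are compatible.
   Context: All Hilbert spaces are finite-dimensional and complex, and all outcome sets are finite. A POVM $\mathsf{A}\in\mathcal{O}(\Omega,\mathcal{H})$ is a map $x\mapsto\mathsf{A}(x)$ to positive operators with $\sum_x\mathsf{A}(x)=I$; POVMs $\mathsf{A}\in\mathcal{O}(\Omega,\mathcal{H})$, $\mathsf{B}\in\mathcal{O}(\Lambda,\mathcal{H})$ are compatible if there is $\mathsf{G}\in\mathcal{O}(\Omega\times\Lambda,\mathcal{H})$ with $\sum_x\mathsf{G}(x,y)=\mathsf{B}(y)$ and $\sum_y\mathsf{G}(x,y)=\mathsf{A}(x)$. An instrument $\mathcal{I}\in\mathrm{Ins}(\Omega,\mathcal{H},\mathcal{K})$ is a family $(\mathcal{I}_x)_{x\in\Omega}$ of completely positive trace-nonincreasing linear maps $\mathcal{L}(\mathcal{H})\to\mathcal{L}(\mathcal{K})$ whose sum is trace preserving; its induced POVM is given by $\mathrm{tr}[\mathsf{A}^{\mathcal{I}}(x)\varrho]=\mathrm{tr}[\mathcal{I}_x(\varrho)]$. It is measure-and-prepare if there are a POVM $\mathsf{A}$ and states $\{\xi_x\}$ on $\mathcal{K}$ with $\mathcal{I}_x(\varrho)=\mathrm{tr}[\mathsf{A}(x)\varrho]\xi_x$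 for all $x,\varrho$. Two instruments $\mathcal{I}\in\mathrm{Ins}(\Omega,\mathcal{H},\mathcal{K})$, $\mathcal{J}\in\mathrm{Ins}(\Lambda,\mathcal{H},\mathcal{V})$ are compatible if there is $\mathcal{G}\in\mathrm{Ins}(\Omega\times\Lambda,\mathcal{H},\mathcal{K}\otimes\mathcal{V})$ with $\sum_{x}\mathrm{tr}_{\mathcal{K}}[\mathcal{G}_{(x,y)}(\varrho)]=\mathcal{J}_y(\varrho)$ for all $y$ and $\sum_y\mathrm{tr}_{\mathcal{V}}[\mathcal{G}_{(x,y)}(\varrho)]=\mathcal{I}_x(\varrho)$ for all $x$, for all states $\varrho$. *)

theory Defs
  imports "Jordan_Normal_Form.Matrix" "Jordan_Normal_Form.Conjugate"
begin

text \<open>Finite-dimensional complex Hilbert spaces are modelled as C^d (d a natural number);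
  operators on C^d are d x d complex matrices (Jordan_Normal_Form mat).
  The tensor product C^m (x) C^n is C^(m*n) with basis index (k,v) |-> k*n + v.\<close>

definition mtrace :: "complex mat \<Rightarrow> complex" where
  "mtrace A = (\<Sum>i<dim_row A. A $$ (i, i))"

definition msum :: "nat \<Rightarrow> nat \<Rightarrow> ('x \<Rightarrow> complex mat) \<Rightarrow> 'x set \<Rightarrow> complex mat" where
  "msum d e f S = mat d e (\<lambda>(i, j). \<Sum>x\<in>S. f x $$ (i, j))"

definition positive_op :: "nat \<Rightarrow> complex mat \<Rightarrow> bool" where
  "positive_op d A \<longleftrightarrow> A \<in> carrier_mat d d \<and>
     (\<forall>v \<in> carrier_vec d. Im ((A *\<^sub>v v) \<bullet>c v) = 0 \<and> Re ((A *\<^sub>v v) \<bullet>c v) \<ge> 0)"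

definition is_state :: "nat \<Rightarrow> complex mat \<Rightarrow> bool" where
  "is_state d \<rho> \<longleftrightarrow> positive_op d \<rho> \<and> mtrace \<rho> = 1"

definition is_povm :: "nat \<Rightarrow> ('x::finite \<Rightarrow> complex mat) \<Rightarrow> bool" where
  "is_povm d A \<longleftrightarrow> (\<forall>x. positive_op d (A x)) \<and> msum d d A UNIV = 1\<^sub>m d"

definition compatible_povms :: "nat \<Rightarrow> ('x::finite \<Rightarrow> complex mat) \<Rightarrow> ('y::finite \<Rightarrow> complex mat) \<Rightarrow> bool" where
  "compatible_povms d A B \<longleftrightarrow> (\<exists>G :: 'x \<times> 'y \<Rightarrow> complex mat. is_povm d G \<and>
      (\<forall>y. msum d d (\<lambda>x. G (x, y)) UNIV = B y) \<and>
      (\<forall>x. msum d d (\<lambda>y. G (x, y)) UNIV = A x))"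

definition linear_map :: "nat \<Rightarrow> nat \<Rightarrow> (complex mat \<Rightarrow> complex mat) \<Rightarrow> bool" where
  "linear_map m n \<Phi> \<longleftrightarrow>
     (\<forall>X \<in> carrier_mat m m. \<Phi> X \<in> carrier_mat n n) \<and>
     (\<forall>X \<in> carrier_mat m m. \<forall>Y \<in> carrier_mat m m. \<Phi> (X + Y) = \<Phi> X + \<Phi> Y) \<and>
     (\<forall>c. \<forall>X \<in> carrier_mat m m. \<Phi> (c \<cdot>\<^sub>m X) = c \<cdot>\<^sub>m \<Phi> X)"

text \<open>The amplification id_k (x) Phi, acting on (k*m) x (k*m) block matrices:
  the (a,b) block of the output is Phi applied to the (a,b) block of the input.\<close>
definition ampl :: "nat \<Rightarrow> nat \<Rightarrow> nat \<Rightarrow> (complex mat \<Rightarrow> complex mat) \<Rightarrow> complex mat \<Rightarrow> complex mat" where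
  "ampl k m n \<Phi> X = mat (k * n) (k * n) (\<lambda>(i, j).
      \<Phi> (mat m m (\<lambda>(r, s). X $$ ((i div n) * m + r, (j div n) * m + s))) $$ (i mod n, j mod n))"

definition completely_positive :: "nat \<Rightarrow> nat \<Rightarrow> (complex mat \<Rightarrow> complex mat) \<Rightarrow> bool" where
  "completely_positive m n \<Phi> \<longleftrightarrow> linear_map m n \<Phi> \<and>
     (\<forall>k. \<forall>X. positive_op (k * m) X \<longrightarrow> positive_op (k * n) (ampl k m n \<Phi> X))"

definition trace_nonincreasing :: "nat \<Rightarrow> (complex mat \<Rightarrow> complex mat) \<Rightarrow> bool" where
  "trace_nonincreasing m \<Phi> \<longleftrightarrow>
     (\<forall>X. positive_op m X \<longrightarrow> Re (mtrace (\<Phi> X)) \<le> Re (mtrace X))"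

definition trace_preserving :: "nat \<Rightarrow> (complex mat \<Rightarrow> complex mat) \<Rightarrow> bool" where
  "trace_preserving m \<Phi> \<longleftrightarrow> (\<forall>X \<in> carrier_mat m m. mtrace (\<Phi> X) = mtrace X)"

definition is_instrument :: "nat \<Rightarrow> nat \<Rightarrow> ('x::finite \<Rightarrow> complex mat \<Rightarrow> complex mat) \<Rightarrow> bool" where
  "is_instrument m n I \<longleftrightarrow>
     (\<forall>x. completely_positive m n (I x) \<and> trace_nonincreasing m (I x)) \<and>
     trace_preserving m (\<lambda>X. msum n n (\<lambda>x. I x X) UNIV)"

definition induced_povm :: "nat \<Rightarrow> ('x \<Rightarrow> complex mat \<Rightarrow> complex mat) \<Rightarrow> ('x \<Rightarrow> complex mat) \<Rightarrow> bool" where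
  "induced_povm m I A \<longleftrightarrow> (\<forall>x. A x \<in> carrier_mat m m \<and>
      (\<forall>\<rho>. is_state m \<rho> \<longrightarrow> mtrace (A x * \<rho>) = mtrace (I x \<rho>)))"

definition measure_and_prepare :: "nat \<Rightarrow> nat \<Rightarrow> ('x::finite \<Rightarrow> complex mat \<Rightarrow> complex mat) \<Rightarrow> bool" where
  "measure_and_prepare m n I \<longleftrightarrow> (\<exists>A \<xi>. is_povm m A \<and> (\<forall>x. is_state n (\<xi> x)) \<and>
      (\<forall>x \<rho>. is_state m \<rho> \<longrightarrow> I x \<rho> = mtrace (A x * \<rho>) \<cdot>\<^sub>m \<xi> x))"

definition ptrace_first :: "nat \<Rightarrow> nat \<Rightarrow> complex mat \<Rightarrow> complex mat" where
  "ptrace_first k v M = mat v v (\<lambda>(b, b'). \<Sum>a<k. M $$ (a * v + b, a * v + b'))"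

definition ptrace_second :: "nat \<Rightarrow> nat \<Rightarrow> complex mat \<Rightarrow> complex mat" where
  "ptrace_second k v M = mat k k (\<lambda>(a, a'). \<Sum>b<v. M $$ (a * v + b, a' * v + b))"

definition compatible_instruments :: "nat \<Rightarrow> nat \<Rightarrow> nat \<Rightarrow>
    ('x::finite \<Rightarrow> complex mat \<Rightarrow> complex mat) \<Rightarrow> ('y::finite \<Rightarrow> complex mat \<Rightarrow> complex mat) \<Rightarrow> bool" where
  "compatible_instruments h k v I J \<longleftrightarrow>
     (\<exists>G :: 'x \<times> 'y \<Rightarrow> complex mat \<Rightarrow> complex mat. is_instrument h (k * v) G \<and>
        (\<forall>\<rho>. is_state h \<rho> \<longrightarrow>
          (\<forall>y. msum v v (\<lambda>x. ptrace_first k v (G (x, y) \<rho>)) UNIV = J y \<rho>) \<and>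
          (\<forall>x. msum k k (\<lambda>y. ptrace_second k v (G (x, y) \<rho>)) UNIV = I x \<rho>)))"

end

theory Submission
  imports Defs
begin

text \<open>
  A joint instrument \<open>G\<close> yields the joint POVM of its
  Heisenberg-picture effects \<open>E z\<close>, characterised by \<open>tr (G z \<rho>) = tr (E z * \<rho>)\<close>: partial traces
  preserve the trace, so the marginals of \<open>E\<close> agree with the induced POVMs on all states, and an
  operator is determined by its expectation values on states. Conversely, if \<open>G\<close> is a joint POVM
  and the two instruments prepare the states \<open>\<xi> x\<close> and \<open>\<eta> y\<close>, then
  \<open>\<rho> \<mapsto> tr (G (x, y) * \<rho>) \<cdot> (\<xi> x \<otimes> \<eta> y)\<close> is a joint instrument; only this direction uses the
  measure-and-prepare form. Complete positivity of that map reduces, through Gram decompositions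
  of positive matrices, to positivity of Kronecker products and of the blockwise pairings
  \<open>(tr (G * X\<^sub>a\<^sub>b))\<^sub>a\<^sub>b\<close> of a positive \<open>G\<close> with a positive block matrix \<open>X\<close>.
\<close>

section \<open>Positive operators and quadratic forms\<close>

text \<open>Complex numbers carry the partial order of \<open>HOL-Library.Complex_Order\<close>, so \<open>0 \<le> z\<close> means that
  \<open>z\<close> is real and nonnegative. Vectors are coordinate functions \<open>nat \<Rightarrow> complex\<close>.\<close>

definition qform :: "nat \<Rightarrow> complex mat \<Rightarrow> (nat \<Rightarrow> complex) \<Rightarrow> complex" where
  "qform d M f = (\<Sum>i<d. \<Sum>j<d. cnj (f i) * M $$ (i, j) * f j)"

lemma cscalar_prod_mult_mat_vec_eq_qform:
  assumes "M \<in> carrier_mat d d"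
  shows "(M *\<^sub>v vec d f) \<bullet>c vec d f = qform d M f"
  using assms unfolding qform_def
  by (auto simp: scalar_prod_def sum_distrib_left sum_distrib_right mult.commute mult.left_commute
      atLeast0LessThan intro!: sum.cong)

lemma positive_op_iff_qform:
  "positive_op d M \<longleftrightarrow> M \<in> carrier_mat d d \<and> (\<forall>f. 0 \<le> qform d M f)"
proof -
  have "(\<forall>v \<in> carrier_vec d. 0 \<le> (M *\<^sub>v v) \<bullet>c v) \<longleftrightarrow> (\<forall>f. 0 \<le> qform d M f)"
    if M: "M \<in> carrier_mat d d"
  proof
    assume "\<forall>v \<in> carrier_vec d. 0 \<le> (M *\<^sub>v v) \<bullet>c v"
    then show "\<forall>f. 0 \<le> qform d M f"
      using cscalar_prod_mult_mat_vec_eq_qform[OF M] by (metis vec_carrier)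
  next
    assume "\<forall>f. 0 \<le> qform d M f"
    moreover have "v = vec d (($) v)" if "v \<in> carrier_vec d" for v :: "complex vec"
      using that by auto
    ultimately show "\<forall>v \<in> carrier_vec d. 0 \<le> (M *\<^sub>v v) \<bullet>c v"
      using cscalar_prod_mult_mat_vec_eq_qform[OF M] by metis
  qed
  then show ?thesis
    unfolding positive_op_def by (auto simp: less_eq_complex_def)
qed

lemma positive_op_carrier: "positive_op d M \<Longrightarrow> M \<in> carrier_mat d d"
  unfolding positive_op_def by blast

lemma is_state_carrier: "is_state d \<rho> \<Longrightarrow> \<rho> \<in> carrier_mat d d"
  unfolding is_state_def positive_op_def by blast

lemma positive_op_qform_nonneg: "positive_op d M \<Longrightarrow> 0 \<le> qform d M f"
  unfolding positive_op_iff_qform by blast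

lemma positive_op_if_qform_eq:
  assumes "positive_op d' P" "M \<in> carrier_mat d d" "\<And>f. qform d M f = qform d' P (T f)"
  shows "positive_op d M"
  using assms unfolding positive_op_iff_qform by simp

lemma sum_delta_bilinear:
  fixes M :: "complex mat"
  assumes "a < d" "b < d"
  shows "(\<Sum>i<d. \<Sum>j<d. cnj (if i = a then x else 0) * M $$ (i, j) * (if j = b then y else 0)) =
    cnj x * M $$ (a, b) * y"
proof -
  have "(\<Sum>i<d. \<Sum>j<d. cnj (if i = a then x else 0) * M $$ (i, j) * (if j = b then y else 0)) =
      (\<Sum>i<d. \<Sum>j<d. if j = b then (if i = a then cnj x * M $$ (i, j) * y else 0) else 0)"
    by (intro sum.cong) auto
  also have "\<dots> = cnj x * M $$ (a, b) * y"
    using assms by (simp add: if_distrib[of "\<lambda>t. sum t _"] cong: if_cong)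
  finally show ?thesis .
qed

lemma qform_single:
  assumes "a < d"
  shows "qform d M (\<lambda>i. if i = a then x else 0) = cnj x * M $$ (a, a) * x"
  using sum_delta_bilinear[OF assms assms] unfolding qform_def .

lemma qform_pair:
  assumes "a < d" "b < d"
  shows "qform d M (\<lambda>i. (if i = a then x else 0) + (if i = b then y else 0)) =
     cnj x * M $$ (a, a) * x + cnj x * M $$ (a, b) * y + cnj y * M $$ (b, a) * x + cnj y * M $$ (b, b) * y"
proof -
  let ?e = "\<lambda>a x i. if i = a then x else 0"
  have "qform d M (\<lambda>i. ?e a x i + ?e b y i) =
      (\<Sum>i<d. \<Sum>j<d. cnj (?e a x i) * M $$ (i, j) * ?e a x j) +
      (\<Sum>i<d. \<Sum>j<d. cnj (?e a x i) * M $$ (i, j) * ?e b y j) +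
      (\<Sum>i<d. \<Sum>j<d. cnj (?e b y i) * M $$ (i, j) * ?e a x j) +
      (\<Sum>i<d. \<Sum>j<d. cnj (?e b y i) * M $$ (i, j) * ?e b y j)"
    unfolding qform_def complex_cnj_add distrib_left distrib_right sum.distrib by (simp only: add_ac)
  then show ?thesis
    by (simp only: sum_delta_bilinear assms)
qed

lemma mat_eq_if_qform_eq:
  assumes M: "M \<in> carrier_mat d d" and N: "N \<in> carrier_mat d d"
    and eq: "\<And>f. qform d M f = qform d N f"
  shows "M = N"
proof (rule eq_matI)
  show "dim_row M = dim_row N" "dim_col M = dim_col N"
    using M N by auto
  have diag: "M $$ (a, a) = N $$ (a, a)" if "a < d" for a
    using eq[of "\<lambda>i. if i = a then 1 else 0"] by (simp add: qform_single[OF that])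
  fix i j
  assume "i < dim_row N" "j < dim_col N"
  then have i: "i < d" and j: "j < d"
    using N by auto
  let ?v = "\<lambda>y k. (if k = i then 1 else 0) + (if k = j then y else 0)"
  have sum: "M $$ (i, j) + M $$ (j, i) = N $$ (i, j) + N $$ (j, i)"
    using eq[of "?v 1"] by (simp add: qform_pair[OF i j] diag i j)
  have "\<i> * (M $$ (i, j) - M $$ (j, i)) = \<i> * (N $$ (i, j) - N $$ (j, i))"
    using eq[of "?v \<i>"] by (simp add: qform_pair[OF i j] diag i j algebra_simps)
  then have "M $$ (i, j) - M $$ (j, i) = N $$ (i, j) - N $$ (j, i)"
    by simp
  with sum have "(M $$ (i, j) + M $$ (j, i)) + (M $$ (i, j) - M $$ (j, i)) =
      (N $$ (i, j) + N $$ (j, i)) + (N $$ (i, j) - N $$ (j, i))"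
    by simp
  then show "M $$ (i, j) = N $$ (i, j)"
    by (simp add: algebra_simps)
qed

lemma cnj_qform: "cnj (qform d M f) = qform d (mat d d (\<lambda>(i, j). cnj (M $$ (j, i)))) f"
proof -
  have "cnj (qform d M f) = (\<Sum>i<d. \<Sum>j<d. f i * cnj (M $$ (i, j)) * cnj (f j))"
    unfolding qform_def by (simp add: cnj_sum)
  also have "\<dots> = (\<Sum>j<d. \<Sum>i<d. f i * cnj (M $$ (i, j)) * cnj (f j))"
    by (rule sum.swap)
  also have "\<dots> = qform d (mat d d (\<lambda>(i, j). cnj (M $$ (j, i)))) f"
    unfolding qform_def by (intro sum.cong refl) (simp add: ac_simps)
  finally show ?thesis .
qed

lemma positive_op_hermitian:
  assumes M: "positive_op d M" and "i < d" "j < d"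
  shows "M $$ (i, j) = cnj (M $$ (j, i))"
proof -
  let ?H = "mat d d (\<lambda>(i, j). cnj (M $$ (j, i)))"
  have "qform d ?H f = qform d M f" for f
    using nonnegative_complex_is_real[OF positive_op_qform_nonneg[OF M, of f]]
    by (simp add: cnj_qform[symmetric] Reals_cnj_iff)
  then have "?H = M"
    using positive_op_carrier[OF M] by (intro mat_eq_if_qform_eq) auto
  then have "?H $$ (i, j) = M $$ (i, j)"
    by simp
  then show ?thesis
    using assms by simp
qed

lemma positive_op_diag_nonneg:
  assumes "positive_op d M" "a < d"
  shows "0 \<le> M $$ (a, a)"
  using positive_op_qform_nonneg[OF assms(1), of "\<lambda>i. if i = a then 1 else 0"]
  by (simp add: qform_single[OF assms(2)])

lemma positive_op_mtrace_nonneg: "positive_op d M \<Longrightarrow> 0 \<le> mtrace M"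
  unfolding mtrace_def
  by (auto simp: positive_op_carrier[THEN carrier_matD(1)] intro: sum_nonneg positive_op_diag_nonneg)

lemma qform_smult: "M \<in> carrier_mat d d \<Longrightarrow> qform d (c \<cdot>\<^sub>m M) f = c * qform d M f"
  unfolding qform_def by (simp add: sum_distrib_left ac_simps)

lemma positive_op_smult:
  assumes "0 \<le> c" "positive_op d M"
  shows "positive_op d (c \<cdot>\<^sub>m M)"
  using assms unfolding positive_op_iff_qform by (simp add: qform_smult)

lemma msum_carrier [simp]: "msum d e f S \<in> carrier_mat d e"
  unfolding msum_def by simp

lemma dim_msum [simp]: "dim_row (msum d e f S) = d" "dim_col (msum d e f S) = e"
  unfolding msum_def by simp_all

lemma index_msum [simp]: "i < d \<Longrightarrow> j < e \<Longrightarrow> msum d e f S $$ (i, j) = (\<Sum>x\<in>S. f x $$ (i, j))"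
  unfolding msum_def by simp

lemma qform_msum: "qform d (msum d d f S) v = (\<Sum>x\<in>S. qform d (f x) v)"
proof -
  have "qform d (msum d d f S) v = (\<Sum>i<d. \<Sum>j<d. \<Sum>x\<in>S. cnj (v i) * f x $$ (i, j) * v j)"
    unfolding qform_def by (simp add: sum_distrib_left sum_distrib_right)
  also have "\<dots> = (\<Sum>x\<in>S. qform d (f x) v)"
    unfolding qform_def by (simp only: sum.swap[of _ S])
  finally show ?thesis .
qed

lemma positive_op_msum:
  assumes "\<And>x. x \<in> S \<Longrightarrow> positive_op d (f x)"
  shows "positive_op d (msum d d f S)"
  using assms unfolding positive_op_iff_qform qform_msum by (auto intro: sum_nonneg)

definition rank1 :: "nat \<Rightarrow> (nat \<Rightarrow> complex) \<Rightarrow> complex mat" where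
  "rank1 d v = mat d d (\<lambda>(i, j). v i * cnj (v j))"

lemma rank1_carrier [simp]: "rank1 d v \<in> carrier_mat d d"
  unfolding rank1_def by simp

lemma dim_rank1 [simp]: "dim_row (rank1 d v) = d" "dim_col (rank1 d v) = d"
  unfolding rank1_def by simp_all

lemma index_rank1 [simp]: "i < d \<Longrightarrow> j < d \<Longrightarrow> rank1 d v $$ (i, j) = v i * cnj (v j)"
  unfolding rank1_def by simp

lemma positive_op_rank1: "positive_op d (rank1 d v)"
proof -
  define w where "w g = (\<Sum>i<d. cnj (g i) * v i)" for g
  have "qform d (rank1 d v) g = w g * cnj (w g)" for g
  proof -
    have "qform d (rank1 d v) g = w g * (\<Sum>j<d. cnj (v j) * g j)"
      unfolding qform_def w_def sum_product by (intro sum.cong refl) (simp add: ac_simps)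
    also have "(\<Sum>j<d. cnj (v j) * g j) = cnj (w g)"
      unfolding w_def by (simp add: cnj_sum ac_simps)
    finally show ?thesis .
  qed
  moreover have "0 \<le> z * cnj z" for z :: complex
    unfolding complex_norm_square[symmetric] by (simp add: less_eq_complex_def)
  ultimately show ?thesis
    unfolding positive_op_iff_qform by simp
qed

section \<open>Gram decomposition of positive operators\<close>

lemma sum_mult_delta:
  fixes g :: "nat \<Rightarrow> complex"
  assumes "a < d"
  shows "(\<Sum>j<d. g j * (if j = a then x else 0)) = g a * x"
proof -
  have "(\<Sum>j<d. g j * (if j = a then x else 0)) = (\<Sum>j<d. if j = a then g j * x else 0)"
    by (rule sum.cong) auto
  then show ?thesis
    using assms by simp
qed

lemma qform_add_single:
  assumes c: "c < d"
  shows "qform d M (\<lambda>i. f i + (if i = c then t else 0)) =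
    qform d M f + cnj t * (\<Sum>j<d. M $$ (c, j) * f j) + (\<Sum>i<d. cnj (f i) * M $$ (i, c)) * t +
    cnj t * M $$ (c, c) * t"
proof -
  let ?e = "\<lambda>i. if i = c then t else 0"
  have inner: "(\<Sum>j<d. x * M $$ (i, j) * (f j + ?e j)) = (\<Sum>j<d. x * M $$ (i, j) * f j) + x * M $$ (i, c) * t"
    for x i
    unfolding distrib_left sum.distrib sum_mult_delta[OF c] ..
  have "qform d M (\<lambda>i. f i + ?e i) =
      (\<Sum>i<d. (\<Sum>j<d. cnj (f i + ?e i) * M $$ (i, j) * f j) + cnj (f i + ?e i) * M $$ (i, c) * t)"
    unfolding qform_def by (simp only: inner)
  also have "\<dots> = (\<Sum>i<d. (\<Sum>j<d. cnj (f i) * M $$ (i, j) * f j) + cnj (f i) * M $$ (i, c) * t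
       + (\<Sum>j<d. M $$ (i, j) * f j) * (if i = c then cnj t else 0) + (M $$ (i, c) * t) * (if i = c then cnj t else 0))"
    by (rule sum.cong[OF refl]) (simp add: algebra_simps sum.distrib sum_distrib_left)
  also have "\<dots> = qform d M f + (\<Sum>i<d. cnj (f i) * M $$ (i, c)) * t +
      (\<Sum>j<d. M $$ (c, j) * f j) * cnj t + (M $$ (c, c) * t) * cnj t"
    unfolding qform_def sum.distrib sum_mult_delta[OF c] by (simp add: sum_distrib_right)
  finally show ?thesis
    by (simp add: algebra_simps)
qed

lemma positive_op_zero_diag:
  assumes P: "positive_op d P" and c: "c < d" and b: "b < d" and z: "P $$ (c, c) = 0"
  shows "P $$ (b, c) = 0"
proof (rule ccontr)
  define w where "w = P $$ (b, c)"
  define q where "q = P $$ (b, b)"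
  define r where "r = (Re q + 1) / (2 * (cmod w)^2)"
  define t where "t = - (complex_of_real r * cnj w)"
  assume "P $$ (b, c) \<noteq> 0"
  then have "cmod w > 0"
    unfolding w_def by simp
  have "w * t = - (complex_of_real r * (w * cnj w))"
    unfolding t_def by (simp add: algebra_simps)
  also have "\<dots> = - complex_of_real (r * (cmod w)^2)"
    using complex_norm_square[of w] by simp
  also have "r * (cmod w)^2 = (Re q + 1) / 2"
    unfolding r_def using \<open>cmod w > 0\<close> by (simp add: field_simps)
  finally have wt: "w * t = - complex_of_real ((Re q + 1) / 2)" .
  have "qform d P (\<lambda>i. (if i = c then t else 0) + (if i = b then 1 else 0)) = cnj (w * t) + w * t + q"
    using z positive_op_hermitian[OF P c b] unfolding qform_pair[OF c b] w_def q_def by simp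
  then have "Re (qform d P (\<lambda>i. (if i = c then t else 0) + (if i = b then 1 else 0))) = -1"
    unfolding wt by simp
  moreover have "0 \<le> qform d P (\<lambda>i. (if i = c then t else 0) + (if i = b then 1 else 0))"
    by (rule positive_op_qform_nonneg[OF P])
  ultimately show False
    by (simp add: less_eq_complex_def)
qed

text \<open>If the pivot \<open>P $$ (c, c)\<close> vanishes, division by zero makes the complement equal to \<open>P\<close>;
  the lemmas below hold in that case as well.\<close>

definition schur_compl :: "nat \<Rightarrow> complex mat \<Rightarrow> nat \<Rightarrow> complex mat" where
  "schur_compl d P c = mat d d (\<lambda>(a, b). P $$ (a, b) - P $$ (a, c) * P $$ (c, b) / P $$ (c, c))"

lemma schur_compl_carrier [simp]: "schur_compl d P c \<in> carrier_mat d d"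
  unfolding schur_compl_def by simp

lemma index_schur_compl [simp]:
  "a < d \<Longrightarrow> b < d \<Longrightarrow> schur_compl d P c $$ (a, b) = P $$ (a, b) - P $$ (a, c) * P $$ (c, b) / P $$ (c, c)"
  unfolding schur_compl_def by simp

lemma positive_op_schur_compl:
  assumes P: "positive_op d P" and c: "c < d"
  shows "positive_op d (schur_compl d P c)"
proof (cases "P $$ (c, c) = 0")
  case True
  then have "schur_compl d P c = P"
    using positive_op_carrier[OF P] by (intro eq_matI) (auto simp: schur_compl_def)
  then show ?thesis
    using P by simp
next
  case False
  define p where "p = P $$ (c, c)"
  have cp: "cnj p = p"
    using nonnegative_complex_is_real[OF positive_op_diag_nonneg[OF P c]] unfolding p_def
    by (simp add: Reals_cnj_iff)
  have "qform d (schur_compl d P c) f =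
      qform d P (\<lambda>i. f i + (if i = c then - (\<Sum>j<d. P $$ (c, j) * f j) / p else 0))" for f
  proof -
    define w where "w = (\<Sum>j<d. P $$ (c, j) * f j)"
    define v where "v = (\<Sum>i<d. cnj (f i) * P $$ (i, c))"
    have "qform d (schur_compl d P c) f =
        (\<Sum>i<d. \<Sum>j<d. cnj (f i) * P $$ (i, j) * f j - (cnj (f i) * P $$ (i, c)) * (P $$ (c, j) * f j) / p)"
      unfolding qform_def p_def by (intro sum.cong refl) (simp add: algebra_simps)
    also have "\<dots> = qform d P f - v * w / p"
      unfolding qform_def v_def w_def by (simp add: sum_subtractf sum_divide_distrib sum_product)
    also have "\<dots> = qform d P f + cnj (- w / p) * w + v * (- w / p) + cnj (- w / p) * p * (- w / p)"
      using cp False unfolding p_def by (simp add: field_simps)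
    finally show ?thesis
      unfolding qform_add_single[OF c] v_def w_def p_def .
  qed
  then show ?thesis
    by (rule positive_op_if_qform_eq[OF P schur_compl_carrier])
qed

lemma schur_compl_pivot_row_col_zero:
  assumes P: "positive_op d P" and c: "c < d" and b: "b < d"
  shows "schur_compl d P c $$ (c, b) = 0" "schur_compl d P c $$ (b, c) = 0"
proof -
  have "P $$ (b, c) = 0 \<and> P $$ (c, b) = 0" if "P $$ (c, c) = 0"
    using positive_op_zero_diag[OF P c b that] positive_op_hermitian[OF P c b] by simp
  then show "schur_compl d P c $$ (c, b) = 0" "schur_compl d P c $$ (b, c) = 0"
    using b c by auto
qed

lemma schur_compl_vanishing_block:
  assumes P: "positive_op d P" and c: "c < d"
    and P0: "\<And>a b. a < d \<Longrightarrow> b < d \<Longrightarrow> a < c \<or> b < c \<Longrightarrow> P $$ (a, b) = 0"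
    and ab: "a < d" "b < d" "a \<le> c \<or> b \<le> c"
  shows "schur_compl d P c $$ (a, b) = 0"
proof -
  consider "a < c" | "b < c" | "a = c" | "b = c"
    using ab(3) by linarith
  then show ?thesis
    using P0 schur_compl_pivot_row_col_zero[OF P c] ab c by cases auto
qed

lemma schur_compl_rank1_update:
  assumes P: "positive_op d P" and c: "c < d"
  defines "s \<equiv> complex_of_real (sqrt (Re (P $$ (c, c))))"
  shows "P = schur_compl d P c + rank1 d (\<lambda>i. P $$ (i, c) / s)"
proof (rule eq_matI)
  have "Im (P $$ (c, c)) = 0" "0 \<le> Re (P $$ (c, c))"
    using positive_op_diag_nonneg[OF P c] by (auto simp: less_eq_complex_def)
  then have ss: "s * cnj s = P $$ (c, c)"
    unfolding s_def by (simp flip: of_real_mult add: complex_eq_iff)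
  fix a b
  assume "a < dim_row (schur_compl d P c + rank1 d (\<lambda>i. P $$ (i, c) / s))"
    and "b < dim_col (schur_compl d P c + rank1 d (\<lambda>i. P $$ (i, c) / s))"
  then have a: "a < d" and b: "b < d"
    by simp_all
  have "rank1 d (\<lambda>i. P $$ (i, c) / s) $$ (a, b) = P $$ (a, c) * cnj (P $$ (b, c)) / (s * cnj s)"
    using a b by simp
  then show "P $$ (a, b) = (schur_compl d P c + rank1 d (\<lambda>i. P $$ (i, c) / s)) $$ (a, b)"
    using a b ss positive_op_hermitian[OF P c b] by simp
qed (use positive_op_carrier[OF P] in simp_all)

lemma msum_rank1_snoc:
  "msum d d (\<lambda>l. rank1 d (u l)) {..<n} + rank1 d v = msum d d (\<lambda>l. rank1 d ((u(n := v)) l)) {..<Suc n}"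
  by (intro eq_matI) auto

text \<open>Cholesky elimination: induction on the size \<open>j\<close> of the trailing block outside of which \<open>P\<close>
  vanishes, removing the pivot \<open>d - Suc j\<close> by a Schur complement in each step.\<close>

lemma positive_op_gram_aux:
  assumes "positive_op d P"
    and "\<And>a b. a < d \<Longrightarrow> b < d \<Longrightarrow> a < d - j \<or> b < d - j \<Longrightarrow> P $$ (a, b) = 0"
  shows "\<exists>(n::nat) u. P = msum d d (\<lambda>l. rank1 d (u l)) {..<n}"
  using assms
proof (induction j arbitrary: P)
  case 0
  then have "P = msum d d (\<lambda>l. rank1 d (\<lambda>_. 0)) {..<0}"
    using positive_op_carrier[OF "0.prems"(1)] by (intro eq_matI) auto
  then show ?case
    by (intro exI[of _ "0::nat"] exI[of _ "\<lambda>_ _. 0"])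
next
  case (Suc j)
  show ?case
  proof (cases "j < d")
    case False
    then show ?thesis
      using Suc.IH[OF Suc.prems(1)] by simp
  next
    case True
    define c where "c = d - Suc j"
    have c: "c < d"
      using True by (simp add: c_def)
    define v where "v = (\<lambda>i. P $$ (i, c) / complex_of_real (sqrt (Re (P $$ (c, c)))))"
    have "\<exists>(n::nat) u. schur_compl d P c = msum d d (\<lambda>l. rank1 d (u l)) {..<n}"
    proof (rule Suc.IH[OF positive_op_schur_compl[OF Suc.prems(1) c]])
      fix a b
      assume "a < d" "b < d" "a < d - j \<or> b < d - j"
      then show "schur_compl d P c $$ (a, b) = 0"
        using Suc.prems(2) by (intro schur_compl_vanishing_block[OF Suc.prems(1) c]) (auto simp: c_def)
    qed
    then obtain n :: nat and u where "schur_compl d P c = msum d d (\<lambda>l. rank1 d (u l)) {..<n}"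
      by blast
    then have "P = msum d d (\<lambda>l. rank1 d (u l)) {..<n} + rank1 d v"
      using schur_compl_rank1_update[OF Suc.prems(1) c] unfolding v_def by simp
    also have "\<dots> = msum d d (\<lambda>l. rank1 d ((u(n := v)) l)) {..<Suc n}"
      by (rule msum_rank1_snoc)
    finally show ?thesis
      by blast
  qed
qed

lemma positive_op_gram:
  "positive_op d P \<Longrightarrow> \<exists>(n::nat) u. P = msum d d (\<lambda>l. rank1 d (u l)) {..<n}"
  using positive_op_gram_aux[of d P d] by simp

section \<open>Traces and states\<close>

lemma mtrace_mult:
  assumes "A \<in> carrier_mat m m" "B \<in> carrier_mat m m"
  shows "mtrace (A * B) = (\<Sum>r<m. \<Sum>s<m. A $$ (r, s) * B $$ (s, r))"
  using assms unfolding mtrace_def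
  by (auto simp: scalar_prod_def atLeast0LessThan intro!: sum.cong)

lemma mtrace_add:
  assumes "A \<in> carrier_mat n n" "B \<in> carrier_mat n n"
  shows "mtrace (A + B) = mtrace A + mtrace B"
  using assms unfolding mtrace_def by (simp add: sum.distrib)

lemma mtrace_smult: "A \<in> carrier_mat n n \<Longrightarrow> mtrace (c \<cdot>\<^sub>m A) = c * mtrace A"
  unfolding mtrace_def by (auto simp: sum_distrib_left intro!: sum.cong)

lemma mtrace_msum:
  assumes "\<And>x. x \<in> S \<Longrightarrow> f x \<in> carrier_mat n n"
  shows "mtrace (msum n n f S) = (\<Sum>x\<in>S. mtrace (f x))"
proof -
  have "mtrace (msum n n f S) = (\<Sum>i<n. \<Sum>x\<in>S. f x $$ (i, i))"
    unfolding mtrace_def by simp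
  also have "\<dots> = (\<Sum>x\<in>S. mtrace (f x))"
    unfolding mtrace_def using assms by (subst sum.swap) (auto intro: sum.cong)
  finally show ?thesis .
qed

lemma mtrace_msum_mult:
  assumes "\<And>x. x \<in> S \<Longrightarrow> f x \<in> carrier_mat d d" "B \<in> carrier_mat d d"
  shows "mtrace (msum d d f S * B) = (\<Sum>x\<in>S. mtrace (f x * B))"
proof -
  have "mtrace (msum d d f S * B) = (\<Sum>r<d. \<Sum>s<d. \<Sum>x\<in>S. f x $$ (r, s) * B $$ (s, r))"
    unfolding mtrace_mult[OF msum_carrier assms(2)] by (simp add: sum_distrib_right)
  also have "\<dots> = (\<Sum>x\<in>S. \<Sum>r<d. \<Sum>s<d. f x $$ (r, s) * B $$ (s, r))"
    by (simp only: sum.swap[of _ S])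
  also have "\<dots> = (\<Sum>x\<in>S. mtrace (f x * B))"
  proof (rule sum.cong[OF refl])
    fix x
    assume "x \<in> S"
    then show "(\<Sum>r<d. \<Sum>s<d. f x $$ (r, s) * B $$ (s, r)) = mtrace (f x * B)"
      using mtrace_mult[OF assms(1) assms(2)] by simp
  qed
  finally show ?thesis .
qed

lemma qform_eq_mtrace_rank1:
  assumes "M \<in> carrier_mat d d"
  shows "qform d M f = mtrace (M * rank1 d f)"
  unfolding qform_def mtrace_mult[OF assms rank1_carrier] by (intro sum.cong refl) (simp add: ac_simps)

lemma mtrace_rank1: "mtrace (rank1 d f) = complex_of_real (\<Sum>i<d. (cmod (f i))^2)"
  unfolding mtrace_def rank1_def by (simp add: complex_norm_square[symmetric] of_real_sum)

lemma mat_eq_if_mtrace_states_eq: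
  assumes M: "M \<in> carrier_mat d d" and N: "N \<in> carrier_mat d d"
    and eq: "\<And>\<rho>. is_state d \<rho> \<Longrightarrow> mtrace (M * \<rho>) = mtrace (N * \<rho>)"
  shows "M = N"
proof (rule mat_eq_if_qform_eq[OF M N])
  fix f
  define t where "t = (\<Sum>i<d. (cmod (f i))^2)"
  show "qform d M f = qform d N f"
  proof (cases "t = 0")
    case True
    then have "f i = 0" if "i < d" for i
      using that unfolding t_def by (subst (asm) sum_nonneg_eq_0_iff) auto
    then show ?thesis
      unfolding qform_def by simp
  next
    case False
    define \<rho> where "\<rho> = complex_of_real (1 / t) \<cdot>\<^sub>m rank1 d f"
    have "0 \<le> complex_of_real (1 / t)"
      unfolding t_def by (simp add: less_eq_complex_def sum_nonneg)
    moreover have "mtrace \<rho> = 1"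
      unfolding \<rho>_def mtrace_smult[OF rank1_carrier] mtrace_rank1 t_def[symmetric]
      using False by (simp flip: of_real_mult)
    ultimately have "is_state d \<rho>"
      unfolding is_state_def \<rho>_def by (simp add: positive_op_smult positive_op_rank1)
    moreover have "mtrace (K * \<rho>) = complex_of_real (1 / t) * qform d K f" if "K \<in> carrier_mat d d" for K
      unfolding \<rho>_def mult_smult_distrib[OF that rank1_carrier] mtrace_smult[OF mult_carrier_mat[OF that rank1_carrier]]
        qform_eq_mtrace_rank1[OF that] ..
    ultimately show ?thesis
      using eq[of \<rho>] M N False by simp
  qed
qed

lemma msum_eq_if_mtrace_states_eq:
  assumes "\<And>z. z \<in> S \<Longrightarrow> A z \<in> carrier_mat d d" "B \<in> carrier_mat d d"
    and "\<And>\<rho>. is_state d \<rho> \<Longrightarrow> (\<Sum>z\<in>S. mtrace (A z * \<rho>)) = mtrace (B * \<rho>)"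
  shows "msum d d A S = B"
  using assms is_state_carrier by (intro mat_eq_if_mtrace_states_eq) (auto simp: mtrace_msum_mult)

lemma one_smult_mat [simp]: "(1 :: 'a :: monoid_mult) \<cdot>\<^sub>m A = A"
  by (intro eq_matI) auto

lemma msum_smult: "Q \<in> carrier_mat n n \<Longrightarrow> msum n n (\<lambda>z. a z \<cdot>\<^sub>m Q) S = (\<Sum>z\<in>S. a z) \<cdot>\<^sub>m Q"
  by (intro eq_matI) (auto simp: sum_distrib_right)

section \<open>Kronecker products and partial traces\<close>

lemma mult_add_less_mult:
  assumes "a < k" "p < (n::nat)"
  shows "a * n + p < k * n"
proof -
  have "a * n + p < Suc a * n"
    using assms by simp
  also have "\<dots> \<le> k * n"
    using assms by (intro mult_le_mono1) simp
  finally show ?thesis .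
qed

lemma sum_lessThan_mult:
  fixes f :: "nat \<Rightarrow> 'a::comm_monoid_add"
  shows "(\<Sum>i<k * n. f i) = (\<Sum>a<k. \<Sum>p<n. f (a * n + p))"
proof -
  have "(\<Sum>i<k * n. f i) = (\<Sum>a<k. sum f {a * n..<a * n + n})"
    using sum.nat_group[of f n k] by (simp add: mult.commute)
  also have "\<dots> = (\<Sum>a<k. \<Sum>p<n. f (a * n + p))"
  proof (rule sum.cong[OF refl])
    fix a
    show "sum f {a * n..<a * n + n} = (\<Sum>p<n. f (a * n + p))"
      by (rule sum.reindex_bij_witness[of _ "\<lambda>p. a * n + p" "\<lambda>i. i - a * n"]) auto
  qed
  finally show ?thesis .
qed

lemma qform_blocks:
  "qform (k * n) M z =
    (\<Sum>a<k. \<Sum>b<k. \<Sum>p<n. \<Sum>q<n. cnj (z (a * n + p)) * M $$ (a * n + p, b * n + q) * z (b * n + q))"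
  unfolding qform_def sum_lessThan_mult[of _ k n] by (simp only: sum.swap[of _ "{..<n}" "{..<k}"])

definition kron :: "nat \<Rightarrow> nat \<Rightarrow> complex mat \<Rightarrow> complex mat \<Rightarrow> complex mat" where
  "kron k n P Q = mat (k * n) (k * n) (\<lambda>(i, j). P $$ (i div n, j div n) * Q $$ (i mod n, j mod n))"

lemma kron_carrier [simp]: "kron k n P Q \<in> carrier_mat (k * n) (k * n)"
  unfolding kron_def by simp

lemma dim_kron [simp]: "dim_row (kron k n P Q) = k * n" "dim_col (kron k n P Q) = k * n"
  unfolding kron_def by simp_all

lemma index_kron:
  assumes "a < k" "b < k" "p < n" "q < n"
  shows "kron k n P Q $$ (a * n + p, b * n + q) = P $$ (a, b) * Q $$ (p, q)"
  using assms mult_add_less_mult[OF assms(1,3)] mult_add_less_mult[OF assms(2,4)]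
  unfolding kron_def by simp

lemma kron_msum_right:
  "kron k n P (msum n n f S) = msum (k * n) (k * n) (\<lambda>x. kron k n P (f x)) S"
proof (rule eq_matI)
  fix i j
  assume "i < dim_row (msum (k * n) (k * n) (\<lambda>x. kron k n P (f x)) S)"
    and "j < dim_col (msum (k * n) (k * n) (\<lambda>x. kron k n P (f x)) S)"
  then have "i < k * n" "j < k * n"
    by simp_all
  moreover from this have "n > 0"
    by (cases n) auto
  ultimately show "kron k n P (msum n n f S) $$ (i, j) = msum (k * n) (k * n) (\<lambda>x. kron k n P (f x)) S $$ (i, j)"
    unfolding kron_def by (simp add: sum_distrib_left)
qed simp_all

lemma qform_kron_rank1:
  "qform (k * n) (kron k n P (rank1 n s)) z = qform k P (\<lambda>a. \<Sum>q<n. cnj (s q) * z (a * n + q))"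
proof -
  define h where "h a = (\<Sum>q<n. cnj (s q) * z (a * n + q))" for a
  have "qform (k * n) (kron k n P (rank1 n s)) z =
      (\<Sum>a<k. \<Sum>b<k. \<Sum>p<n. \<Sum>q<n. (s p * cnj (z (a * n + p))) * P $$ (a, b) * (cnj (s q) * z (b * n + q)))"
    unfolding qform_blocks
  proof (intro sum.cong refl)
    fix a b p q
    assume "a \<in> {..<k}" "b \<in> {..<k}" "p \<in> {..<n}" "q \<in> {..<n}"
    then show "cnj (z (a * n + p)) * kron k n P (rank1 n s) $$ (a * n + p, b * n + q) * z (b * n + q) =
        (s p * cnj (z (a * n + p))) * P $$ (a, b) * (cnj (s q) * z (b * n + q))"
      by (simp add: index_kron)
  qed
  also have "\<dots> = (\<Sum>a<k. \<Sum>b<k. cnj (h a) * P $$ (a, b) * h b)"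
  proof (intro sum.cong refl)
    fix a b
    have "cnj (h a) * P $$ (a, b) * h b =
        (\<Sum>p<n. \<Sum>q<n. (s p * cnj (z (a * n + p))) * P $$ (a, b) * (cnj (s q) * z (b * n + q)))"
      unfolding h_def by (simp add: cnj_sum sum_distrib_left sum_distrib_right ac_simps)
    then show "(\<Sum>p<n. \<Sum>q<n. (s p * cnj (z (a * n + p))) * P $$ (a, b) * (cnj (s q) * z (b * n + q))) =
        cnj (h a) * P $$ (a, b) * h b"
      by simp
  qed
  finally show ?thesis
    unfolding qform_def h_def .
qed

lemma positive_op_kron:
  assumes P: "positive_op k P" and Q: "positive_op n Q"
  shows "positive_op (k * n) (kron k n P Q)"
proof -
  obtain m :: nat and s where "Q = msum n n (\<lambda>l. rank1 n (s l)) {..<m}"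
    using positive_op_gram[OF Q] by blast
  then have "kron k n P Q = msum (k * n) (k * n) (\<lambda>l. kron k n P (rank1 n (s l))) {..<m}"
    by (simp add: kron_msum_right)
  moreover have "positive_op (k * n) (kron k n P (rank1 n (s l)))" for l
    using P by (intro positive_op_if_qform_eq[OF P kron_carrier qform_kron_rank1])
  ultimately show ?thesis
    by (simp add: positive_op_msum)
qed

text \<open>\<open>trace_blocks k m G X\<close> is \<open>(id\<^sub>k \<otimes> tr (G * _)) X\<close> for \<open>X\<close> on \<open>\<complex>\<^sup>k \<otimes> \<complex>\<^sup>m\<close>, i.e. the matrix of
  pairings of \<open>G\<close> with the \<open>m \<times> m\<close> blocks of \<open>X\<close>.\<close>

definition trace_blocks :: "nat \<Rightarrow> nat \<Rightarrow> complex mat \<Rightarrow> complex mat \<Rightarrow> complex mat" where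
  "trace_blocks k m G X = mat k k (\<lambda>(a, b). mtrace (G * mat m m (\<lambda>(r, s). X $$ (a * m + r, b * m + s))))"

lemma trace_blocks_carrier [simp]: "trace_blocks k m G X \<in> carrier_mat k k"
  unfolding trace_blocks_def by simp

lemma qform_trace_blocks_rank1:
  "qform k (trace_blocks k m (rank1 m g) X) c = qform (k * m) X (\<lambda>i. c (i div m) * g (i mod m))"
proof -
  have "qform k (trace_blocks k m (rank1 m g) X) c =
      (\<Sum>a<k. \<Sum>b<k. \<Sum>p<m. \<Sum>q<m. cnj (c a * g p) * X $$ (a * m + p, b * m + q) * (c b * g q))"
    unfolding qform_def
  proof (intro sum.cong refl)
    fix a b
    assume "a \<in> {..<k}" "b \<in> {..<k}"
    then have "trace_blocks k m (rank1 m g) X $$ (a, b) =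
        (\<Sum>q<m. \<Sum>p<m. g q * cnj (g p) * X $$ (a * m + p, b * m + q))"
      by (simp add: trace_blocks_def mtrace_mult[OF rank1_carrier mat_carrier])
    also have "\<dots> = (\<Sum>p<m. \<Sum>q<m. g q * cnj (g p) * X $$ (a * m + p, b * m + q))"
      by (rule sum.swap)
    finally show "cnj (c a) * trace_blocks k m (rank1 m g) X $$ (a, b) * c b =
        (\<Sum>p<m. \<Sum>q<m. cnj (c a * g p) * X $$ (a * m + p, b * m + q) * (c b * g q))"
      by (simp add: sum_distrib_left sum_distrib_right ac_simps)
  qed
  also have "\<dots> = qform (k * m) X (\<lambda>i. c (i div m) * g (i mod m))"
    unfolding qform_blocks by (intro sum.cong refl) simp
  finally show ?thesis .
qed

lemma trace_blocks_msum:
  assumes "\<And>x. x \<in> S \<Longrightarrow> f x \<in> carrier_mat m m"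
  shows "trace_blocks k m (msum m m f S) X = msum k k (\<lambda>x. trace_blocks k m (f x) X) S"
  using assms by (intro eq_matI) (auto simp: trace_blocks_def mtrace_msum_mult)

lemma positive_op_trace_blocks:
  assumes G: "positive_op m G" and X: "positive_op (k * m) X"
  shows "positive_op k (trace_blocks k m G X)"
proof -
  obtain n :: nat and g where "G = msum m m (\<lambda>l. rank1 m (g l)) {..<n}"
    using positive_op_gram[OF G] by blast
  then have "trace_blocks k m G X = msum k k (\<lambda>l. trace_blocks k m (rank1 m (g l)) X) {..<n}"
    by (simp add: trace_blocks_msum)
  moreover have "positive_op k (trace_blocks k m (rank1 m (g l)) X)" for l
    by (intro positive_op_if_qform_eq[OF X trace_blocks_carrier qform_trace_blocks_rank1])
  ultimately show ?thesis
    by (simp add: positive_op_msum)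
qed

lemma mtrace_mult_nonneg:
  assumes G: "positive_op m G" and X: "positive_op m X"
  shows "0 \<le> mtrace (G * X)"
proof -
  have "mat m m (\<lambda>(r, s). X $$ (0 * m + r, 0 * m + s)) = X"
    using positive_op_carrier[OF X] by (intro eq_matI) auto
  then have "trace_blocks 1 m G X $$ (0, 0) = mtrace (G * X)"
    unfolding trace_blocks_def by simp
  moreover have "positive_op 1 (trace_blocks 1 m G X)"
    using X by (intro positive_op_trace_blocks[OF G]) simp
  ultimately show ?thesis
    using positive_op_diag_nonneg by fastforce
qed

lemma ptrace_first_carrier [simp]: "ptrace_first k v M \<in> carrier_mat v v"
  unfolding ptrace_first_def by simp

lemma ptrace_second_carrier [simp]: "ptrace_second k v M \<in> carrier_mat k k"
  unfolding ptrace_second_def by simp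

lemma mtrace_ptrace_first:
  assumes "M \<in> carrier_mat (k * v) (k * v)"
  shows "mtrace (ptrace_first k v M) = mtrace M"
proof -
  have "mtrace (ptrace_first k v M) = (\<Sum>b<v. \<Sum>a<k. M $$ (a * v + b, a * v + b))"
    unfolding mtrace_def ptrace_first_def by simp
  also have "\<dots> = (\<Sum>a<k. \<Sum>b<v. M $$ (a * v + b, a * v + b))"
    by (rule sum.swap)
  also have "\<dots> = mtrace M"
    unfolding mtrace_def using assms sum_lessThan_mult[of "\<lambda>i. M $$ (i, i)" k v] by simp
  finally show ?thesis .
qed

lemma mtrace_ptrace_second:
  assumes "M \<in> carrier_mat (k * v) (k * v)"
  shows "mtrace (ptrace_second k v M) = mtrace M"
  unfolding mtrace_def ptrace_second_def using assms sum_lessThan_mult[of "\<lambda>i. M $$ (i, i)" k v] by simp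

lemma mtrace_msum_ptrace_first:
  "(\<And>x. x \<in> S \<Longrightarrow> M x \<in> carrier_mat (k * v) (k * v)) \<Longrightarrow>
    mtrace (msum v v (\<lambda>x. ptrace_first k v (M x)) S) = (\<Sum>x\<in>S. mtrace (M x))"
  by (simp add: mtrace_msum mtrace_ptrace_first)

lemma mtrace_msum_ptrace_second:
  "(\<And>x. x \<in> S \<Longrightarrow> M x \<in> carrier_mat (k * v) (k * v)) \<Longrightarrow>
    mtrace (msum k k (\<lambda>x. ptrace_second k v (M x)) S) = (\<Sum>x\<in>S. mtrace (M x))"
  by (simp add: mtrace_msum mtrace_ptrace_second)

lemma ptrace_first_kron:
  assumes "P \<in> carrier_mat k k" "Q \<in> carrier_mat n n"
  shows "ptrace_first k n (kron k n P Q) = mtrace P \<cdot>\<^sub>m Q"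
  using assms mult_add_less_mult
  by (intro eq_matI) (auto simp: ptrace_first_def mtrace_def index_kron sum_distrib_right)

lemma ptrace_second_kron:
  assumes "P \<in> carrier_mat k k" "Q \<in> carrier_mat n n"
  shows "ptrace_second k n (kron k n P Q) = mtrace Q \<cdot>\<^sub>m P"
  using assms
  by (intro eq_matI) (auto simp: ptrace_second_def mtrace_def index_kron sum_distrib_left mult.commute)

lemma ptrace_first_smult:
  "M \<in> carrier_mat (k * v) (k * v) \<Longrightarrow> ptrace_first k v (c \<cdot>\<^sub>m M) = c \<cdot>\<^sub>m ptrace_first k v M"
  using mult_add_less_mult by (intro eq_matI) (auto simp: ptrace_first_def sum_distrib_left)

lemma ptrace_second_smult:
  "M \<in> carrier_mat (k * v) (k * v) \<Longrightarrow> ptrace_second k v (c \<cdot>\<^sub>m M) = c \<cdot>\<^sub>m ptrace_second k v M"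
  using mult_add_less_mult by (intro eq_matI) (auto simp: ptrace_second_def sum_distrib_left)

lemma mtrace_kron:
  assumes "P \<in> carrier_mat k k" "Q \<in> carrier_mat n n"
  shows "mtrace (kron k n P Q) = mtrace P * mtrace Q"
  using mtrace_ptrace_first[OF kron_carrier, of k n P Q] assms
  by (simp add: ptrace_first_kron mtrace_smult)

lemma is_state_kron:
  assumes "is_state k P" "is_state n Q"
  shows "is_state (k * n) (kron k n P Q)"
  using assms positive_op_kron mtrace_kron[OF positive_op_carrier positive_op_carrier]
  unfolding is_state_def by simp

section \<open>Instruments in the Heisenberg picture\<close>

lemma msum_empty [simp]: "msum d e f {} = 0\<^sub>m d e"
  by (intro eq_matI) auto

lemma msum_insert:
  assumes "finite S" "x \<notin> S" "f x \<in> carrier_mat d e"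
  shows "msum d e f (insert x S) = f x + msum d e f S"
  using assms by (intro eq_matI) auto

lemma linear_map_zero:
  assumes "linear_map m n \<Phi>"
  shows "\<Phi> (0\<^sub>m m m) = 0\<^sub>m n n"
proof -
  have "\<Phi> (0\<^sub>m m m) = \<Phi> (0 \<cdot>\<^sub>m 0\<^sub>m m m)"
    by simp
  also have "\<dots> = 0 \<cdot>\<^sub>m \<Phi> (0\<^sub>m m m)"
    using assms zero_carrier_mat[of m m] unfolding linear_map_def by blast
  also have "\<dots> = 0\<^sub>m n n"
  proof -
    have "\<Phi> (0\<^sub>m m m) \<in> carrier_mat n n"
      using assms zero_carrier_mat[of m m] unfolding linear_map_def by blast
    then show ?thesis
      by (intro eq_matI) auto
  qed
  finally show ?thesis .
qed

lemma linear_map_msum: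
  assumes \<Phi>: "linear_map m n \<Phi>" and "finite S" and "\<And>x. x \<in> S \<Longrightarrow> f x \<in> carrier_mat m m"
  shows "\<Phi> (msum m m f S) = msum n n (\<lambda>x. \<Phi> (f x)) S"
  using assms(2,3)
proof (induction S rule: finite_induct)
  case empty
  then show ?case
    using linear_map_zero[OF \<Phi>] by simp
next
  case (insert x S)
  have "\<Phi> (msum m m f (insert x S)) = \<Phi> (f x) + \<Phi> (msum m m f S)"
    using insert \<Phi> unfolding linear_map_def by (simp add: msum_insert)
  also have "\<dots> = msum n n (\<lambda>x. \<Phi> (f x)) (insert x S)"
    using insert \<Phi> unfolding linear_map_def by (simp add: msum_insert)
  finally show ?case .
qed

definition mat_unit :: "nat \<Rightarrow> nat \<Rightarrow> nat \<Rightarrow> complex mat" where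
  "mat_unit m a b = mat m m (\<lambda>(r, s). if r = a \<and> s = b then 1 else 0)"

lemma mat_unit_carrier [simp]: "mat_unit m a b \<in> carrier_mat m m"
  unfolding mat_unit_def by simp

lemma mat_eq_msum_mat_unit:
  assumes "X \<in> carrier_mat m m"
  shows "X = msum m m (\<lambda>(a, b). X $$ (a, b) \<cdot>\<^sub>m mat_unit m a b) ({..<m} \<times> {..<m})"
proof -
  have "(\<Sum>p\<in>{..<m} \<times> {..<m}. (case p of (a, b) \<Rightarrow> X $$ (a, b) \<cdot>\<^sub>m mat_unit m a b) $$ (i, j)) = X $$ (i, j)"
    if "i < m" "j < m" for i j
  proof -
    have "(\<Sum>p\<in>{..<m} \<times> {..<m}. (case p of (a, b) \<Rightarrow> X $$ (a, b) \<cdot>\<^sub>m mat_unit m a b) $$ (i, j)) =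
        (\<Sum>p\<in>{..<m} \<times> {..<m}. if p = (i, j) then X $$ (i, j) else 0)"
      using that by (intro sum.cong) (auto simp: mat_unit_def split: if_splits)
    then show ?thesis
      using that by simp
  qed
  then show ?thesis
    using assms by (intro eq_matI) auto
qed

lemma mtrace_mat_unit: "a < m \<Longrightarrow> mtrace (mat_unit m a b) = (if a = b then 1 else 0)"
  unfolding mtrace_def mat_unit_def by (auto intro: sum.neutral)

definition trace_dual :: "nat \<Rightarrow> (complex mat \<Rightarrow> complex mat) \<Rightarrow> complex mat" where
  "trace_dual m \<Phi> = mat m m (\<lambda>(i, j). mtrace (\<Phi> (mat_unit m j i)))"

lemma trace_dual_carrier [simp]: "trace_dual m \<Phi> \<in> carrier_mat m m"
  unfolding trace_dual_def by simp

lemma mtrace_trace_dual: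
  assumes \<Phi>: "linear_map m n \<Phi>" and X: "X \<in> carrier_mat m m"
  shows "mtrace (\<Phi> X) = mtrace (trace_dual m \<Phi> * X)"
proof -
  have \<Phi>_units: "\<Phi> (c \<cdot>\<^sub>m mat_unit m a b) = c \<cdot>\<^sub>m \<Phi> (mat_unit m a b)"
    "\<Phi> (mat_unit m a b) \<in> carrier_mat n n" for a b c
    using \<Phi> unfolding linear_map_def by simp_all
  have "mtrace (\<Phi> X) = mtrace (msum n n (\<lambda>(a, b). X $$ (a, b) \<cdot>\<^sub>m \<Phi> (mat_unit m a b)) ({..<m} \<times> {..<m}))"
    by (subst mat_eq_msum_mat_unit[OF X]) (simp add: linear_map_msum[OF \<Phi>] split_def \<Phi>_units)
  also have "\<dots> = (\<Sum>(a, b)\<in>{..<m} \<times> {..<m}. X $$ (a, b) * mtrace (\<Phi> (mat_unit m a b)))"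
    by (subst mtrace_msum) (auto simp: split_def mtrace_smult[OF \<Phi>_units(2)] \<Phi>_units)
  also have "\<dots> = (\<Sum>a<m. \<Sum>b<m. X $$ (a, b) * mtrace (\<Phi> (mat_unit m a b)))"
    by (simp add: sum.cartesian_product)
  also have "\<dots> = (\<Sum>b<m. \<Sum>a<m. X $$ (a, b) * mtrace (\<Phi> (mat_unit m a b)))"
    by (rule sum.swap)
  also have "\<dots> = mtrace (trace_dual m \<Phi> * X)"
    unfolding mtrace_mult[OF trace_dual_carrier X] by (simp add: trace_dual_def mult.commute)
  finally show ?thesis .
qed

lemma ampl_one:
  assumes "linear_map m n \<Phi>" "X \<in> carrier_mat m m"
  shows "ampl 1 m n \<Phi> X = \<Phi> X"
proof -
  have "mat m m (\<lambda>(r, s). X $$ (0 * m + r, 0 * m + s)) = X"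
    using assms(2) by (intro eq_matI) auto
  moreover have "\<Phi> X \<in> carrier_mat n n"
    using assms unfolding linear_map_def by blast
  ultimately show ?thesis
    by (intro eq_matI) (auto simp: ampl_def)
qed

lemma completely_positive_positive_op:
  assumes "completely_positive m n \<Phi>" "positive_op m X"
  shows "positive_op n (\<Phi> X)"
  using assms ampl_one[of m n \<Phi> X] positive_op_carrier[OF assms(2)]
  unfolding completely_positive_def by (metis mult_1)

lemma is_instrument_linear_map: "is_instrument m n G \<Longrightarrow> linear_map m n (G z)"
  unfolding is_instrument_def completely_positive_def by blast

lemma is_instrument_carrier: "is_instrument m n G \<Longrightarrow> X \<in> carrier_mat m m \<Longrightarrow> G z X \<in> carrier_mat n n"
  using is_instrument_linear_map unfolding linear_map_def by blast

lemma is_povm_trace_dual_instrument: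
  assumes G: "is_instrument m n G"
  shows "is_povm m (\<lambda>z. trace_dual m (G z))"
  unfolding is_povm_def
proof (intro conjI allI)
  fix z
  have "qform m (trace_dual m (G z)) f = mtrace (G z (rank1 m f))" for f
    using mtrace_trace_dual[OF is_instrument_linear_map[OF G] rank1_carrier]
    by (simp add: qform_eq_mtrace_rank1)
  moreover have "completely_positive m n (G z)"
    using G unfolding is_instrument_def by blast
  then have "positive_op n (G z (rank1 m f))" for f
    by (rule completely_positive_positive_op[OF _ positive_op_rank1])
  then have "0 \<le> mtrace (G z (rank1 m f))" for f
    by (rule positive_op_mtrace_nonneg)
  ultimately show "positive_op m (trace_dual m (G z))"
    by (simp add: positive_op_iff_qform)
next
  have "msum m m (\<lambda>z. trace_dual m (G z)) UNIV $$ (i, j) = 1\<^sub>m m $$ (i, j)" if "i < m" "j < m" for i j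
  proof -
    have "msum m m (\<lambda>z. trace_dual m (G z)) UNIV $$ (i, j) = (\<Sum>z\<in>UNIV. mtrace (G z (mat_unit m j i)))"
      using that by (simp add: trace_dual_def)
    also have "\<dots> = mtrace (msum n n (\<lambda>z. G z (mat_unit m j i)) UNIV)"
      by (simp add: mtrace_msum is_instrument_carrier[OF G])
    also have "\<dots> = mtrace (mat_unit m j i)"
      using G unfolding is_instrument_def trace_preserving_def by simp
    also have "\<dots> = 1\<^sub>m m $$ (i, j)"
      using that by (simp add: mtrace_mat_unit)
    finally show ?thesis .
  qed
  then show "msum m m (\<lambda>z. trace_dual m (G z)) UNIV = 1\<^sub>m m"
    by (intro eq_matI) auto
qed

lemma compatible_povms_if_compatible_instruments:
  fixes I :: "'x::finite \<Rightarrow> complex mat \<Rightarrow> complex mat" and J :: "'y::finite \<Rightarrow> complex mat \<Rightarrow> complex mat"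
  assumes AI: "induced_povm h I AI" and AJ: "induced_povm h J AJ"
    and "compatible_instruments h k v I J"
  shows "compatible_povms h AI AJ"
proof -
  obtain G :: "'x \<times> 'y \<Rightarrow> complex mat \<Rightarrow> complex mat" where
    G: "is_instrument h (k * v) G" and
    marg: "\<And>\<rho>. is_state h \<rho> \<Longrightarrow>
      (\<forall>y. msum v v (\<lambda>x. ptrace_first k v (G (x, y) \<rho>)) UNIV = J y \<rho>) \<and>
      (\<forall>x. msum k k (\<lambda>y. ptrace_second k v (G (x, y) \<rho>)) UNIV = I x \<rho>)"
    using assms(3) unfolding compatible_instruments_def by blast
  define A where "A z = trace_dual h (G z)" for z
  have trA: "mtrace (A z * \<rho>) = mtrace (G z \<rho>)" if "is_state h \<rho>" for z \<rho>
    using that unfolding A_def by (simp add: mtrace_trace_dual[OF is_instrument_linear_map[OF G]] is_state_carrier)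
  have GC: "is_state h \<rho> \<Longrightarrow> G z \<rho> \<in> carrier_mat (k * v) (k * v)" for z \<rho>
    using is_instrument_carrier[OF G] is_state_carrier by blast
  have "msum h h (\<lambda>x. A (x, y)) UNIV = AJ y" for y
  proof (rule msum_eq_if_mtrace_states_eq)
    fix \<rho>
    assume \<rho>: "is_state h \<rho>"
    have "mtrace (AJ y * \<rho>) = mtrace (msum v v (\<lambda>x. ptrace_first k v (G (x, y) \<rho>)) UNIV)"
      using AJ \<rho> marg[OF \<rho>] unfolding induced_povm_def by simp
    then show "(\<Sum>x\<in>UNIV. mtrace (A (x, y) * \<rho>)) = mtrace (AJ y * \<rho>)"
      using GC[OF \<rho>] by (simp add: trA[OF \<rho>] mtrace_msum_ptrace_first)
  qed (use AJ in \<open>auto simp: A_def induced_povm_def\<close>)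
  moreover have "msum h h (\<lambda>y. A (x, y)) UNIV = AI x" for x
  proof (rule msum_eq_if_mtrace_states_eq)
    fix \<rho>
    assume \<rho>: "is_state h \<rho>"
    have "mtrace (AI x * \<rho>) = mtrace (msum k k (\<lambda>y. ptrace_second k v (G (x, y) \<rho>)) UNIV)"
      using AI \<rho> marg[OF \<rho>] unfolding induced_povm_def by simp
    then show "(\<Sum>y\<in>UNIV. mtrace (A (x, y) * \<rho>)) = mtrace (AI x * \<rho>)"
      using GC[OF \<rho>] by (simp add: trA[OF \<rho>] mtrace_msum_ptrace_second)
  qed (use AI in \<open>auto simp: A_def induced_povm_def\<close>)
  ultimately show ?thesis
    using is_povm_trace_dual_instrument[OF G] unfolding compatible_povms_def A_def by (intro exI) auto
qed

section \<open>Measure-and-prepare instruments\<close>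

definition measure_prepare :: "('z \<Rightarrow> complex mat) \<Rightarrow> ('z \<Rightarrow> complex mat) \<Rightarrow> 'z \<Rightarrow> complex mat \<Rightarrow> complex mat"
  where "measure_prepare E \<sigma> z X = mtrace (E z * X) \<cdot>\<^sub>m \<sigma> z"

lemma linear_map_measure_prepare:
  assumes "E z \<in> carrier_mat m m" "\<sigma> z \<in> carrier_mat n n"
  shows "linear_map m n (measure_prepare E \<sigma> z)"
  unfolding linear_map_def measure_prepare_def
proof (intro conjI ballI allI)
  fix X Y :: "complex mat"
  assume X: "X \<in> carrier_mat m m" and Y: "Y \<in> carrier_mat m m"
  have "mtrace (E z * (X + Y)) = mtrace (E z * X) + mtrace (E z * Y)"
    using assms X Y by (simp add: mult_add_distrib_mat mtrace_add[of _ m])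
  then show "mtrace (E z * (X + Y)) \<cdot>\<^sub>m \<sigma> z = mtrace (E z * X) \<cdot>\<^sub>m \<sigma> z + mtrace (E z * Y) \<cdot>\<^sub>m \<sigma> z"
    using assms by (simp add: add_smult_distrib_right_mat)
next
  fix c and X :: "complex mat"
  assume X: "X \<in> carrier_mat m m"
  have "mtrace (E z * (c \<cdot>\<^sub>m X)) = c * mtrace (E z * X)"
    using assms X by (simp add: mult_smult_distrib mtrace_smult[of _ m])
  then show "mtrace (E z * (c \<cdot>\<^sub>m X)) \<cdot>\<^sub>m \<sigma> z = c \<cdot>\<^sub>m (mtrace (E z * X) \<cdot>\<^sub>m \<sigma> z)"
    by (intro eq_matI) auto
qed (use assms in simp)

lemma ampl_measure_prepare:
  assumes "\<sigma> z \<in> carrier_mat n n"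
  shows "ampl k m n (measure_prepare E \<sigma> z) X = kron k n (trace_blocks k m (E z) X) (\<sigma> z)"
proof (rule eq_matI)
  fix i j
  assume "i < dim_row (kron k n (trace_blocks k m (E z) X) (\<sigma> z))"
    and "j < dim_col (kron k n (trace_blocks k m (E z) X) (\<sigma> z))"
  then have "i < k * n" "j < k * n"
    by simp_all
  moreover from this have "n > 0"
    by (cases n) auto
  ultimately show "ampl k m n (measure_prepare E \<sigma> z) X $$ (i, j) =
      kron k n (trace_blocks k m (E z) X) (\<sigma> z) $$ (i, j)"
    using assms by (simp add: ampl_def kron_def trace_blocks_def measure_prepare_def less_mult_imp_div_less)
qed (simp_all add: ampl_def)

lemma mtrace_measure_prepare:
  assumes "is_state n (\<sigma> z)"
  shows "mtrace (measure_prepare E \<sigma> z X) = mtrace (E z * X)"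
proof -
  have "\<sigma> z \<in> carrier_mat n n" "mtrace (\<sigma> z) = 1"
    using assms positive_op_carrier unfolding is_state_def by blast+
  then show ?thesis
    unfolding measure_prepare_def by (simp add: mtrace_smult)
qed

lemma is_instrument_measure_prepare:
  assumes E: "is_povm m E" and \<sigma>: "\<And>z. is_state n (\<sigma> z)"
  shows "is_instrument m n (measure_prepare E \<sigma>)"
proof -
  have E_pos: "positive_op m (E z)" and \<sigma>_pos: "positive_op n (\<sigma> z)" for z
    using E \<sigma> unfolding is_povm_def is_state_def by blast+
  note E_carrier = positive_op_carrier[OF E_pos] and \<sigma>_carrier = positive_op_carrier[OF \<sigma>_pos]
  have E_sum: "(\<Sum>z\<in>UNIV. mtrace (E z * X)) = mtrace X" if X: "X \<in> carrier_mat m m" for X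
  proof -
    have "(\<Sum>z\<in>UNIV. mtrace (E z * X)) = mtrace (msum m m E UNIV * X)"
      by (rule mtrace_msum_mult[symmetric, OF E_carrier X])
    then show ?thesis
      using E X unfolding is_povm_def by simp
  qed
  have tr: "mtrace (measure_prepare E \<sigma> z X) = mtrace (E z * X)" for z X
    by (rule mtrace_measure_prepare[where \<sigma> = \<sigma> and z = z, OF \<sigma>])
  have "completely_positive m n (measure_prepare E \<sigma> z)" for z
    unfolding completely_positive_def ampl_measure_prepare[where \<sigma> = \<sigma> and z = z, OF \<sigma>_carrier]
    using linear_map_measure_prepare[where E = E and \<sigma> = \<sigma> and z = z, OF E_carrier \<sigma>_carrier]
      positive_op_kron[OF positive_op_trace_blocks[OF E_pos] \<sigma>_pos] by blast
  moreover have "trace_nonincreasing m (measure_prepare E \<sigma> z)" for z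
    unfolding trace_nonincreasing_def
  proof (intro allI impI)
    fix X
    assume X: "positive_op m X"
    have "mtrace (measure_prepare E \<sigma> z X) \<le> (\<Sum>z\<in>UNIV. mtrace (E z * X))"
      unfolding tr
      by (rule member_le_sum) (auto intro: mtrace_mult_nonneg E_pos X)
    then show "Re (mtrace (measure_prepare E \<sigma> z X)) \<le> Re (mtrace X)"
      unfolding E_sum[OF positive_op_carrier[OF X]] by (simp add: less_eq_complex_def)
  qed
  moreover have "trace_preserving m (\<lambda>X. msum n n (\<lambda>z. measure_prepare E \<sigma> z X) UNIV)"
    unfolding trace_preserving_def
  proof
    fix X :: "complex mat"
    assume X: "X \<in> carrier_mat m m"
    have "mtrace (msum n n (\<lambda>z. measure_prepare E \<sigma> z X) UNIV) = (\<Sum>z\<in>UNIV. mtrace (E z * X))"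
      unfolding tr[symmetric] by (rule mtrace_msum) (simp add: measure_prepare_def \<sigma>_carrier)
    then show "mtrace (msum n n (\<lambda>z. measure_prepare E \<sigma> z X) UNIV) = mtrace X"
      using E_sum[OF X] by simp
  qed
  ultimately show ?thesis
    unfolding is_instrument_def by blast
qed

lemma measure_and_prepare_induced_povm:
  assumes "measure_and_prepare m n I" and A: "induced_povm m I A"
  obtains \<xi> where "\<And>x. is_state n (\<xi> x)" and "\<And>x \<rho>. is_state m \<rho> \<Longrightarrow> I x \<rho> = mtrace (A x * \<rho>) \<cdot>\<^sub>m \<xi> x"
proof -
  obtain B \<xi> where \<xi>: "\<And>x. is_state n (\<xi> x)"
    and I: "\<And>x \<rho>. is_state m \<rho> \<Longrightarrow> I x \<rho> = mtrace (B x * \<rho>) \<cdot>\<^sub>m \<xi> x"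
    using assms(1) unfolding measure_and_prepare_def by blast
  have "I x \<rho> = mtrace (A x * \<rho>) \<cdot>\<^sub>m \<xi> x" if \<rho>: "is_state m \<rho>" for x \<rho>
  proof -
    have "\<xi> x \<in> carrier_mat n n" "mtrace (\<xi> x) = 1"
      using \<xi>[of x] positive_op_carrier unfolding is_state_def by blast+
    then have "mtrace (I x \<rho>) = mtrace (B x * \<rho>)"
      using I[OF \<rho>] by (simp add: mtrace_smult)
    moreover have "mtrace (A x * \<rho>) = mtrace (I x \<rho>)"
      using A \<rho> unfolding induced_povm_def by blast
    ultimately show ?thesis
      using I[OF \<rho>] by simp
  qed
  with \<xi> show ?thesis
    by (rule that)
qed

lemma measure_prepare_kron_marginals:
  fixes E :: "'x \<times> 'y \<Rightarrow> complex mat"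
  assumes E: "\<And>z. E z \<in> carrier_mat h h" and \<xi>: "\<And>x. is_state k (\<xi> x)" and \<eta>: "\<And>y. is_state v (\<eta> y)"
    and X: "X \<in> carrier_mat h h"
  defines "\<sigma> \<equiv> \<lambda>z. kron k v (\<xi> (fst z)) (\<eta> (snd z))"
  shows "msum v v (\<lambda>x. ptrace_first k v (measure_prepare E \<sigma> (x, y) X)) UNIV =
      mtrace (msum h h (\<lambda>x. E (x, y)) UNIV * X) \<cdot>\<^sub>m \<eta> y"
    and "msum k k (\<lambda>y. ptrace_second k v (measure_prepare E \<sigma> (x, y) X)) UNIV =
      mtrace (msum h h (\<lambda>y. E (x, y)) UNIV * X) \<cdot>\<^sub>m \<xi> x"
proof -
  have \<xi>_carrier: "\<xi> x \<in> carrier_mat k k" and \<xi>_tr: "mtrace (\<xi> x) = 1" for x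
    using \<xi>[of x] positive_op_carrier unfolding is_state_def by blast+
  have \<eta>_carrier: "\<eta> y \<in> carrier_mat v v" and \<eta>_tr: "mtrace (\<eta> y) = 1" for y
    using \<eta>[of y] positive_op_carrier unfolding is_state_def by blast+
  show "msum v v (\<lambda>x. ptrace_first k v (measure_prepare E \<sigma> (x, y) X)) UNIV =
      mtrace (msum h h (\<lambda>x. E (x, y)) UNIV * X) \<cdot>\<^sub>m \<eta> y"
    by (simp add: measure_prepare_def \<sigma>_def ptrace_first_smult ptrace_first_kron \<xi>_carrier \<eta>_carrier \<xi>_tr
        msum_smult mtrace_msum_mult E X)
  show "msum k k (\<lambda>y. ptrace_second k v (measure_prepare E \<sigma> (x, y) X)) UNIV =
      mtrace (msum h h (\<lambda>y. E (x, y)) UNIV * X) \<cdot>\<^sub>m \<xi> x"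
    by (simp add: measure_prepare_def \<sigma>_def ptrace_second_smult ptrace_second_kron \<xi>_carrier \<eta>_carrier \<eta>_tr
        msum_smult mtrace_msum_mult E X)
qed

lemma compatible_instruments_if_compatible_povms:
  fixes I :: "'x::finite \<Rightarrow> complex mat \<Rightarrow> complex mat" and J :: "'y::finite \<Rightarrow> complex mat \<Rightarrow> complex mat"
  assumes "measure_and_prepare h k I" and "measure_and_prepare h v J"
    and AI: "induced_povm h I AI" and AJ: "induced_povm h J AJ"
    and "compatible_povms h AI AJ"
  shows "compatible_instruments h k v I J"
proof -
  obtain G :: "'x \<times> 'y \<Rightarrow> complex mat" where G: "is_povm h G"
    and GJ: "\<And>y. msum h h (\<lambda>x. G (x, y)) UNIV = AJ y"
    and GI: "\<And>x. msum h h (\<lambda>y. G (x, y)) UNIV = AI x"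
    using assms(5) unfolding compatible_povms_def by blast
  obtain \<xi> where \<xi>: "\<And>x. is_state k (\<xi> x)"
    and I: "\<And>x \<rho>. is_state h \<rho> \<Longrightarrow> I x \<rho> = mtrace (AI x * \<rho>) \<cdot>\<^sub>m \<xi> x"
    using measure_and_prepare_induced_povm[OF assms(1) AI] by blast
  obtain \<eta> where \<eta>: "\<And>y. is_state v (\<eta> y)"
    and J: "\<And>y \<rho>. is_state h \<rho> \<Longrightarrow> J y \<rho> = mtrace (AJ y * \<rho>) \<cdot>\<^sub>m \<eta> y"
    using measure_and_prepare_induced_povm[OF assms(2) AJ] by blast
  define \<sigma> where "\<sigma> z = kron k v (\<xi> (fst z)) (\<eta> (snd z))" for z
  have G_carrier: "G z \<in> carrier_mat h h" for z
    using G positive_op_carrier unfolding is_povm_def by blast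
  have "is_instrument h (k * v) (measure_prepare G \<sigma>)"
    by (rule is_instrument_measure_prepare[OF G]) (simp add: \<sigma>_def is_state_kron \<xi> \<eta>)
  moreover have
    "msum v v (\<lambda>x. ptrace_first k v (measure_prepare G \<sigma> (x, y) \<rho>)) UNIV = J y \<rho>"
    "msum k k (\<lambda>y. ptrace_second k v (measure_prepare G \<sigma> (x, y) \<rho>)) UNIV = I x \<rho>"
    if \<rho>: "is_state h \<rho>" for x y \<rho>
    using measure_prepare_kron_marginals[where E = G and \<xi> = \<xi> and \<eta> = \<eta>, OF G_carrier \<xi> \<eta> is_state_carrier[OF \<rho>]] I[OF \<rho>] J[OF \<rho>] GI GJ
    unfolding \<sigma>_def[abs_def] by simp_all
  ultimately show ?thesis
    unfolding compatible_instruments_def by blast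
qed

theorem proposition9:
  fixes dH dK dV :: nat
    and I :: "'x::finite \<Rightarrow> complex mat \<Rightarrow> complex mat"
    and J :: "'y::finite \<Rightarrow> complex mat \<Rightarrow> complex mat"
    and AI :: "'x \<Rightarrow> complex mat" and AJ :: "'y \<Rightarrow> complex mat"
  assumes "0 < dH" and "0 < dK" and "0 < dV"
    and "is_instrument dH dK I" and "is_instrument dH dV J"
    and "measure_and_prepare dH dK I" and "measure_and_prepare dH dV J"
    and "induced_povm dH I AI" and "induced_povm dH J AJ"
  shows "compatible_instruments dH dK dV I J \<longleftrightarrow> compatible_povms dH AI AJ"
  using compatible_povms_if_compatible_instruments[OF assms(8,9)]
    compatible_instruments_if_compatible_povms[OF assms(6-9)]
  by blast

end
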